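(* Let $G$ be the digraph with vertex set $\{v_1,\dots,v_7\}$ and arc set $\{(v_1,v_4),(v_1,v_2),(v_2,v_4),(v_2,v_3),(v_3,v_4),(v_4,v_6),(v_4,v_5),(v_5,v_6),(v_6,v_7),(v_4,v_7)\}$. Then $G$ is an esp-digraph and $\chi_o(G)=7$. In particular, the bound $\chi_o(G)\le 7$ for esp-digraphs is best possible.
   Context: An oriented graph is a digraph without loops and without pairs of opposite arcs. For a digraph $G=(V,E)$ (parallel arcs allowed; the definitions apply verbatim), an oriented $r$-vertex-coloring is a map $c:V\to\{1,\dots,r\}$ such that (i) $c(u)\ne c(v)$ for every arc $(u,v)\in E$, and (ii) $c(u)\ne c(y)$ for every two arcs $(u,v),(x,y)\in E$ with $c(v)=c(x)$. Equivalently, $c$ is a homomorphism to an oriented graph on $r$ vertices. The oriented chromatic number $\chi_o(G)$ is the smallest $r$ for which such a coloring exists. Edge series-parallel (multi)digraphs (esp-digraphs) are defined recursively, each with a distinguished source and sink: (i) a digraph with two distinct vertices $u,v$ and the single arc $(u,v)$ is an esp-digraph with source $u$ and sink $v$; (ii) if $G_1,G_2$ are vertex-disjoint esp-digraphs, then the parallel composition $G_1\cup G_2$ (identify the source of $G_1$ with the source of $G_2$ and the sink of $G_1$ with the sink of $G_2$; arcs are united, possibly creating parallel arcs) is an esp-digraph with these identified source and sink, and the series composition $G_1\times G_2$ (identify the sink of $G_1$ with the source of $G_2$) is an esp-digraph with source the source of $G_1$ and sink the sink of $G_2$. *)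

theory Defs
  imports Main "HOL-Library.Multiset"
begin

definition oriented_coloring :: "'a set \<Rightarrow> ('a \<times> 'a) multiset \<Rightarrow> nat \<Rightarrow> ('a \<Rightarrow> nat) \<Rightarrow> bool" where
  "oriented_coloring V E r c \<longleftrightarrow>
     (\<forall>v\<in>V. c v \<in> {1..r}) \<and>
     (\<forall>(u,v)\<in>set_mset E. c u \<noteq> c v) \<and>
     (\<forall>(u,v)\<in>set_mset E. \<forall>(x,y)\<in>set_mset E. c v = c x \<longrightarrow> c u \<noteq> c y)"

definition oriented_chromatic_number :: "'a set \<Rightarrow> ('a \<times> 'a) multiset \<Rightarrow> nat" where
  "oriented_chromatic_number V E = (LEAST r. \<exists>c. oriented_coloring V E r c)"

text \<open>Edge series-parallel digraphs with source s and sink t. Vertex-disjointness of the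
  components up to the identified vertices is expressed by the intersection conditions.\<close>
inductive esp :: "'a set \<Rightarrow> ('a \<times> 'a) multiset \<Rightarrow> 'a \<Rightarrow> 'a \<Rightarrow> bool" where
  single: "u \<noteq> v \<Longrightarrow> esp {u, v} {#(u, v)#} u v"
| parallel: "esp V1 E1 s t \<Longrightarrow> esp V2 E2 s t \<Longrightarrow> V1 \<inter> V2 = {s, t}
     \<Longrightarrow> esp (V1 \<union> V2) (E1 + E2) s t"
| series: "esp V1 E1 s m \<Longrightarrow> esp V2 E2 m t \<Longrightarrow> V1 \<inter> V2 = {m}
     \<Longrightarrow> esp (V1 \<union> V2) (E1 + E2) s t"

definition esp_digraph :: "'a set \<Rightarrow> ('a \<times> 'a) multiset \<Rightarrow> bool" where
  "esp_digraph V E \<longleftrightarrow> (\<exists>s t. esp V E s t)"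

text \<open>The example digraph, vertex v_i represented by the natural number i.\<close>
definition exV :: "nat set" where "exV = {1..7}"

definition exE :: "(nat \<times> nat) multiset" where
  "exE = {#(1,4),(1,2),(2,4),(2,3),(3,4),(4,6),(4,5),(5,6),(6,7),(4,7)#}"

end

theory Submission
  imports Defs
begin

text \<open>The graph is the series composition of two copies of the esp-digraph obtained from a
  transitive triangle by a series arc and a parallel arc; hence it is an esp-digraph. Since it
  has no loops and no opposite arcs, the identity is an oriented 7-colouring. Conversely any two
  of its seven vertices are joined by an arc or by a directed path of length two (through the
  cut vertex \<open>v\<^sub>4\<close> or inside a triangle), and such pairs must receive distinct colours.\<close>

lemma esp_endpoints: "esp V E s t \<Longrightarrow> s \<in> V \<and> t \<in> V \<and> s \<noteq> t"
  by (induction rule: esp.induct) auto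

lemma esp_add_arc:
  assumes "esp V E s t"
  shows "esp V (add_mset (s, t) E) s t"
proof -
  have "s \<in> V" "t \<in> V" "s \<noteq> t"
    using esp_endpoints[OF assms] by auto
  then have "esp ({s, t} \<union> V) ({#(s, t)#} + E) s t"
    by (intro esp.parallel[OF esp.single assms]) auto
  with \<open>s \<in> V\<close> \<open>t \<in> V\<close> show ?thesis
    by (simp add: insert_absorb)
qed

lemma esp_transitive_triangle:
  assumes "distinct [u, m, w]"
  shows "esp {u, m, w} {#(u, w), (u, m), (m, w)#} u w"
proof -
  have vertices: "{u, m} \<union> {m, w} = {u, m, w}"
    by blast
  have "esp {u, m, w} ({#(u, m)#} + {#(m, w)#}) u w"
    unfolding vertices[symmetric] using assms by (intro esp.series[OF esp.single esp.single]) auto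
  from esp_add_arc[OF this] show ?thesis
    by (simp add: add_mset_commute)
qed

lemma inj_on_oriented_coloring:
  assumes arcs: "\<forall>(u, v)\<in>#E. u \<in> V \<and> v \<in> V \<and> u \<noteq> v \<and> (v, u) \<notin># E"
    and "inj_on c V" and "c ` V \<subseteq> {1..r}"
  shows "oriented_coloring V E r c"
proof -
  have arc: "u \<in> V" "v \<in> V" "u \<noteq> v" "(v, u) \<notin># E" if "(u, v) \<in># E" for u v
    using arcs that by auto
  have c_eq: "c x = c y \<longleftrightarrow> x = y" if "x \<in> V" "y \<in> V" for x y
    using \<open>inj_on c V\<close> that by (auto dest: inj_onD)
  have "c u \<noteq> c y" if uv: "(u, v) \<in># E" and xy: "(x, y) \<in># E" and "c v = c x" for u v x y
  proof
    assume "c u = c y"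
    then have "u = y" and "v = x"
      using arc[OF uv] arc[OF xy] c_eq \<open>c v = c x\<close> by auto
    then show False
      using arc(4)[OF uv] xy by simp
  qed
  then show ?thesis
    using arc c_eq \<open>c ` V \<subseteq> {1..r}\<close> unfolding oriented_coloring_def by blast
qed

definition oriented_clique :: "('a \<times> 'a) multiset \<Rightarrow> 'a set \<Rightarrow> bool" where
  "oriented_clique E W \<longleftrightarrow>
     (\<forall>u\<in>W. \<forall>w\<in>W. u \<noteq> w \<longrightarrow>
        (u, w) \<in># E \<or> (w, u) \<in># E \<or>
        (\<exists>m. (u, m) \<in># E \<and> (m, w) \<in># E \<or> (w, m) \<in># E \<and> (m, u) \<in># E))"

lemma oriented_coloring_inj_on_clique:
  assumes "oriented_coloring V E r c" and "oriented_clique E W"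
  shows "inj_on c W"
proof (rule inj_onI, rule ccontr)
  have arc: "c a \<noteq> c b" if "(a, b) \<in># E" for a b
    using assms(1) that unfolding oriented_coloring_def by blast
  have two_path: "c a \<noteq> c b" if "(a, m) \<in># E" and "(m, b) \<in># E" for a m b
    using assms(1) that unfolding oriented_coloring_def by blast
  fix u w
  assume "u \<in> W" "w \<in> W" "c u = c w" "u \<noteq> w"
  then have "(u, w) \<in># E \<or> (w, u) \<in># E \<or>
      (\<exists>m. (u, m) \<in># E \<and> (m, w) \<in># E \<or> (w, m) \<in># E \<and> (m, u) \<in># E)"
    using assms(2) unfolding oriented_clique_def by blast
  then show False
    using arc two_path \<open>c u = c w\<close> by metis
qed

lemma oriented_clique_card_le:
  assumes "oriented_coloring V E r c" and "oriented_clique E W" and "W \<subseteq> V"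
  shows "card W \<le> r"
proof -
  have "c ` W \<subseteq> {1..r}"
    using assms(1,3) unfolding oriented_coloring_def by blast
  then have "card W \<le> card {1..r}"
    using card_inj_on_le[OF oriented_coloring_inj_on_clique[OF assms(1,2)]] by blast
  then show ?thesis
    by simp
qed

lemma oriented_chromatic_number_eqI:
  assumes "oriented_coloring V E r c"
    and "\<And>r' c'. oriented_coloring V E r' c' \<Longrightarrow> r \<le> r'"
  shows "oriented_chromatic_number V E = r"
  unfolding oriented_chromatic_number_def
  by (rule Least_equality) (use assms in blast)+

lemma example_vertices: "exV = {1, 2, 3, 4, 5, 6, 7}"
  unfolding exV_def by auto

lemma example_arcs:
  "set_mset exE = {(1, 4), (1, 2), (2, 4), (2, 3), (3, 4), (4, 6), (4, 5), (5, 6), (6, 7), (4, 7)}"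
  unfolding exE_def by simp

lemma esp_example: "esp exV exE 1 7"
proof -
  have left_vertices: "{1, 2} \<union> {2, 3, 4} = {1, 2, 3, 4::nat}"
    by auto
  have "esp {1, 2, 3, 4} ({#(1, 2)#} + {#(2, 4), (2, 3), (3, 4)#}) (1::nat) 4"
    unfolding left_vertices[symmetric]
    by (intro esp.series[OF esp.single esp_transitive_triangle]) auto
  from esp_add_arc[OF this]
  have left: "esp {1, 2, 3, 4} {#(1, 4), (1, 2), (2, 4), (2, 3), (3, 4)#} (1::nat) 4"
    by (simp add: add_mset_commute)
  have right_vertices: "{4, 5, 6} \<union> {6, 7} = {4, 5, 6, 7::nat}"
    by auto
  have "esp {4, 5, 6, 7} ({#(4, 6), (4, 5), (5, 6)#} + {#(6, 7)#}) (4::nat) 7"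
    unfolding right_vertices[symmetric]
    by (intro esp.series[OF esp_transitive_triangle esp.single]) auto
  from esp_add_arc[OF this]
  have right: "esp {4, 5, 6, 7} {#(4, 7), (4, 6), (4, 5), (5, 6), (6, 7)#} (4::nat) 7"
    by (simp add: add_mset_commute)
  have "esp ({1, 2, 3, 4} \<union> {4, 5, 6, 7})
      ({#(1, 4), (1, 2), (2, 4), (2, 3), (3, 4)#} + {#(4, 7), (4, 6), (4, 5), (5, 6), (6, 7)#})
      (1::nat) 7"
    by (rule esp.series[OF left right]) auto
  moreover have "{1, 2, 3, 4} \<union> {4, 5, 6, 7} = exV"
    unfolding exV_def by auto
  moreover have "{#(1, 4), (1, 2), (2, 4), (2, 3), (3, 4)#}
      + {#(4, 7), (4, 6), (4, 5), (5, 6), (6, 7)#} = exE"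
    unfolding exE_def by (simp add: add_mset_commute)
  ultimately show ?thesis
    by simp
qed

lemma example_oriented_clique: "oriented_clique exE exV"
  unfolding oriented_clique_def example_vertices example_arcs by (simp, blast)

theorem mainTheorem2:
  shows "esp_digraph exV exE \<and> oriented_chromatic_number exV exE = 7"
proof
  show "esp_digraph exV exE"
    unfolding esp_digraph_def using esp_example by blast
  have "oriented_coloring exV exE 7 id"
    by (rule inj_on_oriented_coloring) (auto simp: example_vertices example_arcs)
  moreover have "7 \<le> r" if "oriented_coloring exV exE r c" for r c
    using oriented_clique_card_le[OF that example_oriented_clique subset_refl]
    by (simp add: example_vertices)
  ultimately show "oriented_chromatic_number exV exE = 7"
    by (rule oriented_chromatic_number_eqI)
qed

end
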